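(* Let $i\in I$ and $k\in\mathbb{Z}$. \begin{enumerate} \item[(i)] Let $u\in\widehat{\mathcal{A}}_{[k+1]}$ be a homogeneous element with $e^\star_i(u)=0$. Then $f_{i,k}u=q^{-(\mathrm{wt}(f_{i,k}),\mathrm{wt}(u))}uf_{i,k}$. \item[(ii)] Let $v\in\widehat{\mathcal{A}}_{[k-1]}$ be a homogeneous element with $e'_i(v)=0$. Then $vf_{i,k}=q^{-(\mathrm{wt}(f_{i,k}),\mathrm{wt}(v))}f_{i,k}v$. \end{enumerate}
   Context: Let $\mathsf{C}=(c_{i,j})_{i,j\in I}$ be a finite-type Cartan matrix with simple roots $\alpha_i$, coroots $h_i$, symmetric form $(\alpha_i,\alpha_j)=\mathsf{d}_ic_{i,j}$ ($\min\mathsf{d}_i=1$), $q_i=q^{\mathsf{d}_i}$, $\mathbf{k}=\mathbb{Q}(q^{1/2})$. $\widehat{\mathcal{A}}$ is the bosonic extension generated by $f_{i,p}$ ($i\in I,p\in\mathbb{Z}$) with quantum Serre relations among $\{f_{i,p}\}_{i\in I}$ for fixed $p$, $f_{i,m}f_{j,p}=q_i^{(-1)^{p-m+1}c_{i,j}}f_{j,p}f_{i,m}$ ($p>m+1$), $f_{i,p}f_{j,p+1}=q_i^{c_{i,j}}f_{j,p+1}f_{i,p}+\delta_{i,j}(1-q_i^2)$, graded by $\mathrm{wt}(f_{i,p})=(-1)^{p+1}\alpha_i$. $\widehat{\mathcal{A}}_{[k]}$ is the subalgebra generated by $f_{i,k}$ ($i\in I$), identified with $\mathcal{U}_q^-(\mathfrak{g})$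 via $f_{i,k}\mapsto f_i$; through this, the $q$-derivations $e'_i,e^\star_i$ of $\mathcal{U}_q^-(\mathfrak{g})$ act on it, where $e'_i(f_j)=e^\star_i(f_j)=\delta_{i,j}$, $e'_i(xy)=e'_i(x)y+q_i^{\langle h_i,\mathrm{wt}(x)\rangle}xe'_i(y)$, $e^\star_i(xy)=xe^\star_i(y)+q_i^{\langle h_i,\mathrm{wt}(y)\rangle}e^\star_i(x)y$. *)

theory Defs
  imports Main "HOL-Computational_Algebra.Polynomial" "HOL-Computational_Algebra.Fraction_Field"
begin

type_synonym kfield = "rat poly fract"

text \<open>The indeterminate q^(1/2); q = qhalf^2.\<close>
definition qhalf :: kfield where "qhalf = Fract [:0, 1:] 1"

definition qpow :: "int \<Rightarrow> kfield" where "qpow n = qhalf powi (2 * n)"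

definition neg1pow :: "int \<Rightarrow> int" where "neg1pow n = (if even n then 1 else -1)"

definition qint :: "kfield \<Rightarrow> nat \<Rightarrow> kfield" where
  "qint x n = (x ^ n - inverse x ^ n) / (x - inverse x)"
definition qfact :: "kfield \<Rightarrow> nat \<Rightarrow> kfield" where
  "qfact x n = (\<Prod>m = 1..n. qint x m)"
definition qbinom :: "kfield \<Rightarrow> nat \<Rightarrow> nat \<Rightarrow> kfield" where
  "qbinom x n r = qfact x n / (qfact x r * qfact x (n - r))"

definition finite_type_cartan :: "('i::finite \<Rightarrow> 'i \<Rightarrow> int) \<Rightarrow> ('i \<Rightarrow> int) \<Rightarrow> bool" where
  "finite_type_cartan C d \<longleftrightarrow>
     (\<forall>i. C i i = 2) \<and> (\<forall>i j. i \<noteq> j \<longrightarrow> C i j \<le> 0) \<and>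
     (\<forall>i. d i \<ge> 1) \<and> (\<exists>i. d i = 1) \<and>
     (\<forall>i j. d i * C i j = d j * C j i) \<and>
     (\<forall>x :: 'i \<Rightarrow> real. x \<noteq> (\<lambda>_. 0) \<longrightarrow>
        (\<Sum>a\<in>UNIV. \<Sum>b\<in>UNIV. x a * real_of_int (d a * C a b) * x b) > 0)"

text \<open>Weights are elements of the root lattice, written in the basis of simple roots.
  The symmetric form: (alpha_a, alpha_b) = d_a c_ab.\<close>
definition bil :: "('i::finite \<Rightarrow> 'i \<Rightarrow> int) \<Rightarrow> ('i \<Rightarrow> int) \<Rightarrow> ('i \<Rightarrow> int) \<Rightarrow> ('i \<Rightarrow> int) \<Rightarrow> int" where
  "bil C d la mu = (\<Sum>a\<in>UNIV. \<Sum>b\<in>UNIV. la a * mu b * d a * C a b)"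

definition simple_root :: "'i \<Rightarrow> 'i \<Rightarrow> int" where
  "simple_root i = (\<lambda>a. if a = i then 1 else 0)"

definition word_content :: "'i list \<Rightarrow> 'i \<Rightarrow> int" where
  "word_content w = (\<lambda>a. int (count_list w a))"

type_synonym 'a ncpoly = "'a list \<Rightarrow> kfield"

definition fin_supp :: "'a ncpoly \<Rightarrow> bool" where
  "fin_supp P \<longleftrightarrow> finite {w. P w \<noteq> 0}"

definition ncmul :: "'a ncpoly \<Rightarrow> 'a ncpoly \<Rightarrow> 'a ncpoly" where
  "ncmul P Q = (\<lambda>w. \<Sum>n\<le>length w. P (take n w) * Q (drop n w))"

definition ncadd :: "'a ncpoly \<Rightarrow> 'a ncpoly \<Rightarrow> 'a ncpoly" where
  "ncadd P Q = (\<lambda>w. P w + Q w)"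

definition ncsmult :: "kfield \<Rightarrow> 'a ncpoly \<Rightarrow> 'a ncpoly" where
  "ncsmult c P = (\<lambda>w. c * P w)"

definition ncdiff :: "'a ncpoly \<Rightarrow> 'a ncpoly \<Rightarrow> 'a ncpoly" where
  "ncdiff P Q = (\<lambda>w. P w - Q w)"

definition ncone :: "'a ncpoly" where
  "ncone = (\<lambda>w. if w = [] then 1 else 0)"

definition letter :: "'a \<Rightarrow> 'a ncpoly" where
  "letter x = (\<lambda>w. if w = [x] then 1 else 0)"

inductive_set ideal_gen :: "'a ncpoly set \<Rightarrow> 'a ncpoly set" for G where
  zero: "(\<lambda>_. 0) \<in> ideal_gen G"
| gen: "g \<in> G \<Longrightarrow> g \<in> ideal_gen G"
| add: "a \<in> ideal_gen G \<Longrightarrow> b \<in> ideal_gen G \<Longrightarrow> ncadd a b \<in> ideal_gen G"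
| left: "a \<in> ideal_gen G \<Longrightarrow> fin_supp p \<Longrightarrow> ncmul p a \<in> ideal_gen G"
| right: "a \<in> ideal_gen G \<Longrightarrow> fin_supp p \<Longrightarrow> ncmul a p \<in> ideal_gen G"

definition homog_content :: "'i ncpoly \<Rightarrow> ('i \<Rightarrow> int) \<Rightarrow> bool" where
  "homog_content P \<beta> \<longleftrightarrow> (\<forall>w. P w \<noteq> 0 \<longrightarrow> word_content w = \<beta>)"

section \<open>U_q^-(g): free algebra on I modulo quantum Serre relations\<close>

definition serre_el :: "('i \<Rightarrow> 'i \<Rightarrow> int) \<Rightarrow> ('i \<Rightarrow> int) \<Rightarrow> 'i \<Rightarrow> 'i \<Rightarrow> 'a \<Rightarrow> 'a \<Rightarrow> 'a ncpoly" where
  "serre_el C d i j x y = (let n = nat (1 - C i j) in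
     (\<lambda>w. \<Sum>r\<le>n. if w = replicate (n - r) x @ y # replicate r x
                  then (-1) ^ r * qbinom (qpow (d i)) n r else 0))"

definition serre_ideal :: "('i \<Rightarrow> 'i \<Rightarrow> int) \<Rightarrow> ('i \<Rightarrow> int) \<Rightarrow> 'i ncpoly set" where
  "serre_ideal C d = ideal_gen {serre_el C d i j i j | i j. i \<noteq> j}"

text \<open>The q-derivations e'_i and e*_i, lifted to the free algebra (they preserve the Serre ideal).
  Convention of U_q^-: wt(f_j) = -alpha_j, so <h_i, wt(f_j)> = -c_ij.
  e'_i(xy) = e'_i(x) y + q_i^{<h_i,wt x>} x e'_i(y): deleting an occurrence of i
  contributes q_i^{<h_i, wt(letters before it)>}.
  e*_i(xy) = x e*_i(y) + q_i^{<h_i,wt y>} e*_i(x) y: deleting an occurrence of i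
  contributes q_i^{<h_i, wt(letters after it)>}.\<close>
definition eprime :: "('i \<Rightarrow> 'i \<Rightarrow> int) \<Rightarrow> ('i \<Rightarrow> int) \<Rightarrow> 'i \<Rightarrow> 'i ncpoly \<Rightarrow> 'i ncpoly" where
  "eprime C d i P = (\<lambda>v. \<Sum>s\<le>length v.
      P (take s v @ i # drop s v) * qpow (d i * (- sum_list (map (C i) (take s v)))))"

definition estar :: "('i \<Rightarrow> 'i \<Rightarrow> int) \<Rightarrow> ('i \<Rightarrow> int) \<Rightarrow> 'i \<Rightarrow> 'i ncpoly \<Rightarrow> 'i ncpoly" where
  "estar C d i P = (\<lambda>v. \<Sum>s\<le>length v.
      P (take s v @ i # drop s v) * qpow (d i * (- sum_list (map (C i) (drop s v)))))"

section \<open>The bosonic extension: free algebra on I x Z modulo the defining relations\<close>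

definition boson_rel_serre :: "('i \<Rightarrow> 'i \<Rightarrow> int) \<Rightarrow> ('i \<Rightarrow> int) \<Rightarrow> ('i \<times> int) ncpoly set" where
  "boson_rel_serre C d = {serre_el C d i j (i, p) (j, p) | i j p. i \<noteq> j}"

definition boson_rel_far :: "('i \<Rightarrow> 'i \<Rightarrow> int) \<Rightarrow> ('i \<Rightarrow> int) \<Rightarrow> ('i \<times> int) ncpoly set" where
  "boson_rel_far C d = {ncdiff (ncmul (letter (i, m)) (letter (j, p)))
       (ncsmult (qpow (d i * (neg1pow (p - m + 1) * C i j))) (ncmul (letter (j, p)) (letter (i, m))))
     | i j m p. p > m + 1}"

definition boson_rel_adj :: "('i \<Rightarrow> 'i \<Rightarrow> int) \<Rightarrow> ('i \<Rightarrow> int) \<Rightarrow> ('i \<times> int) ncpoly set" where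
  "boson_rel_adj C d = {ncdiff (ncdiff (ncmul (letter (i, p)) (letter (j, p + 1)))
       (ncsmult (qpow (d i * C i j)) (ncmul (letter (j, p + 1)) (letter (i, p)))))
       (ncsmult (if i = j then 1 - qpow (2 * d i) else 0) ncone)
     | i j p. True}"

definition boson_ideal :: "('i \<Rightarrow> 'i \<Rightarrow> int) \<Rightarrow> ('i \<Rightarrow> int) \<Rightarrow> ('i \<times> int) ncpoly set" where
  "boson_ideal C d = ideal_gen (boson_rel_serre C d \<union> boson_rel_far C d \<union> boson_rel_adj C d)"

definition boson_eq :: "('i \<Rightarrow> 'i \<Rightarrow> int) \<Rightarrow> ('i \<Rightarrow> int) \<Rightarrow> ('i \<times> int) ncpoly \<Rightarrow> ('i \<times> int) ncpoly \<Rightarrow> bool" where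
  "boson_eq C d P Q \<longleftrightarrow> ncdiff P Q \<in> boson_ideal C d"

text \<open>The algebra map U_q^- -> A_[k], f_i |-> f_{i,k}, on representatives.\<close>
definition emb :: "int \<Rightarrow> 'i ncpoly \<Rightarrow> ('i \<times> int) ncpoly" where
  "emb k P = (\<lambda>w. if (\<forall>x\<in>set w. snd x = k) then P (map fst w) else 0)"

text \<open>Weight grading of the bosonic extension: wt(f_{i,p}) = (-1)^{p+1} alpha_i.
  An element of A_[p] of Q_+-content beta has weight (-1)^{p+1} beta.\<close>
definition wt_layer :: "int \<Rightarrow> ('i \<Rightarrow> int) \<Rightarrow> ('i \<Rightarrow> int)" where
  "wt_layer p \<beta> = (\<lambda>a. neg1pow (p + 1) * \<beta> a)"

end

theory Submission
  imports Defs
begin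

text \<open>
  Write F = f_{i,k}, let f_w = f_{w_1,k+1} ... f_{w_n,k+1} for a word w, and let
  c_w = c_{i,w_1} + ... + c_{i,w_n}. Pushing F through f_w from left to right with the relation
  f_{i,k} f_{j,k+1} = q_i^{c_ij} f_{j,k+1} f_{i,k} + \<delta>_ij (1 - q_i^2) gives F f_w = q_i^{c_w} f_w F
  plus one correction term for each occurrence of i in w: the monomial with that letter deleted,
  times a power of q. Altogether the corrections are (1 - q_i^2) q_i^{c_w - c_ii} e*_i(f_w).
  For homogeneous u the exponent c_w is the same for all words of u, so by linearity
  F u - q_i^{c_w} u F is a scalar multiple of e*_i(u), which vanishes in the bosonic extension
  once e*_i(u) lies in the Serre ideal; and q_i^{c_w} = q^{-(wt F, wt u)}. Part (ii) is the
  mirror image: pushing f_{i,k} leftwards through a monomial of the layer k-1 produces e'_i.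
\<close>

lemma ncmul_letter_Nil: "ncmul (letter a) P [] = 0"
  by (simp add: ncmul_def letter_def)

lemma ncmul_letter_Cons: "ncmul (letter a) P (b # w) = (if b = a then P w else 0)"
proof -
  have "ncmul (letter a) P (b # w) =
      (\<Sum>n\<le>Suc (length w). letter a (take n (b # w)) * P (drop n (b # w)))"
    by (simp add: ncmul_def)
  also have "\<dots> = (\<Sum>n\<le>length w. letter a (b # take n w) * P (drop n w))"
    by (subst sum.atMost_Suc_shift) (simp add: letter_def)
  also have "\<dots> = (\<Sum>n\<le>length w. if n = 0 then (if b = a then P w else 0) else 0)"
    by (rule sum.cong) (auto simp: letter_def)
  finally show ?thesis by simp
qed

lemma ncmul_letter_right_Nil: "ncmul P (letter a) [] = 0"
  by (simp add: ncmul_def letter_def)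

lemma ncmul_letter_right_snoc: "ncmul P (letter a) (w @ [b]) = (if b = a then P w else 0)"
proof -
  have "ncmul P (letter a) (w @ [b]) =
      (\<Sum>n\<le>Suc (length w). P (take n (w @ [b])) * letter a (drop n (w @ [b])))"
    by (simp add: ncmul_def)
  also have "\<dots> = (\<Sum>n\<le>length w. P (take n w) * letter a (drop n w @ [b]))"
    by (subst sum.atMost_Suc) (simp add: letter_def)
  also have "\<dots> = (\<Sum>n\<le>length w. if n = length w then (if b = a then P w else 0) else 0)"
    by (rule sum.cong) (auto simp: letter_def)
  finally show ?thesis by simp
qed

lemma ncmul_assoc: "ncmul (ncmul P Q) R = ncmul P (ncmul Q R)"
proof (rule ext)
  fix w :: "'a list"
  define g where "g m l = P (take m w) * Q (take l (drop m w)) * R (drop (m + l) w)" for m l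
  have "ncmul (ncmul P Q) R w = (\<Sum>n\<le>length w. \<Sum>m\<le>n. g m (n - m))"
    unfolding ncmul_def
  proof (rule sum.cong[OF refl])
    fix n assume "n \<in> {..length w}"
    then show "(\<Sum>m\<le>length (take n w). P (take m (take n w)) * Q (drop m (take n w))) *
        R (drop n w) = (\<Sum>m\<le>n. g m (n - m))"
      by (simp add: sum_distrib_right g_def take_drop min_absorb1)
  qed
  also have "\<dots> = (\<Sum>(m, l)\<in>{(m, l). m + l \<le> length w}. g m l)"
    by (rule sum.triangle_reindex_eq[symmetric])
  also have "\<dots> = (\<Sum>m\<le>length w. \<Sum>l\<le>length w - m. g m l)"
    by (simp add: sum.Sigma) (rule sum.cong; auto)
  also have "\<dots> = ncmul P (ncmul Q R) w"
    by (simp add: ncmul_def sum_distrib_left g_def mult.assoc add.commute)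
  finally show "ncmul (ncmul P Q) R w = ncmul P (ncmul Q R) w" .
qed

lemma ncmul_one_left: "ncmul ncone P = P"
proof (rule ext)
  fix w
  have "ncmul ncone P w = (\<Sum>n\<le>length w. if n = 0 then P w else 0)"
    unfolding ncmul_def by (rule sum.cong) (auto simp: ncone_def)
  then show "ncmul ncone P w = P w" by simp
qed

lemma ncmul_one_right: "ncmul P ncone = P"
proof (rule ext)
  fix w
  have "ncmul P ncone w = (\<Sum>n\<le>length w. if n = length w then P w else 0)"
    unfolding ncmul_def by (rule sum.cong) (auto simp: ncone_def)
  then show "ncmul P ncone w = P w" by simp
qed

lemma ncmul_add_left: "ncmul (ncadd P Q) R = ncadd (ncmul P R) (ncmul Q R)"
  by (simp add: ncmul_def ncadd_def distrib_right sum.distrib fun_eq_iff)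

lemma ncmul_add_right: "ncmul R (ncadd P Q) = ncadd (ncmul R P) (ncmul R Q)"
  by (simp add: ncmul_def ncadd_def distrib_left sum.distrib fun_eq_iff)

lemma ncmul_diff_left: "ncmul (ncdiff P Q) R = ncdiff (ncmul P R) (ncmul Q R)"
  by (simp add: ncmul_def ncdiff_def left_diff_distrib sum_subtractf fun_eq_iff)

lemma ncmul_diff_right: "ncmul R (ncdiff P Q) = ncdiff (ncmul R P) (ncmul R Q)"
  by (simp add: ncmul_def ncdiff_def right_diff_distrib sum_subtractf fun_eq_iff)

lemma ncmul_smult_left: "ncmul (ncsmult c P) R = ncsmult c (ncmul P R)"
  by (simp add: ncmul_def ncsmult_def sum_distrib_left mult.assoc fun_eq_iff)

lemma ncmul_smult_right: "ncmul R (ncsmult c P) = ncsmult c (ncmul R P)"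
  by (simp add: ncmul_def ncsmult_def sum_distrib_left mult.left_commute fun_eq_iff)

lemma ncsmult_zero: "ncsmult 0 P = (\<lambda>_. 0)"
  by (simp add: ncsmult_def)

definition ncmono :: "'a list \<Rightarrow> 'a ncpoly" where
  "ncmono w = (\<lambda>v. if v = w then 1 else 0)"

lemma ncmono_Nil: "ncmono [] = ncone"
  by (simp add: ncmono_def ncone_def)

lemma ncmono_Cons: "ncmono (j # w) = ncmul (letter j) (ncmono w)"
proof (rule ext)
  fix v
  show "ncmono (j # w) v = ncmul (letter j) (ncmono w) v"
    by (cases v) (auto simp: ncmul_letter_Nil ncmul_letter_Cons ncmono_def)
qed

lemma ncmono_snoc: "ncmono (w @ [j]) = ncmul (ncmono w) (letter j)"
proof (rule ext)
  fix v
  show "ncmono (w @ [j]) v = ncmul (ncmono w) (letter j) v"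
    by (cases v rule: rev_cases)
      (auto simp: ncmul_letter_right_Nil ncmul_letter_right_snoc ncmono_def)
qed

lemma mult_ncmono_eq_ncsmult: "(\<lambda>v. f v * ncmono w v) = ncsmult (f w) (ncmono w)"
  by (auto simp: ncmono_def ncsmult_def fun_eq_iff)

lemma ncpoly_expansion:
  assumes "fin_supp u"
  shows "u = (\<lambda>x. \<Sum>w\<in>{w. u w \<noteq> 0}. u w * ncmono w x)"
proof (rule ext)
  fix x
  have "(\<Sum>w\<in>{w. u w \<noteq> 0}. u w * ncmono w x) =
      (\<Sum>w\<in>{w. u w \<noteq> 0}. if w = x then u x else 0)"
    by (rule sum.cong) (auto simp: ncmono_def)
  also have "\<dots> = u x"
    using assms by (simp add: fin_supp_def)
  finally show "u x = (\<Sum>w\<in>{w. u w \<noteq> 0}. u w * ncmono w x)" by simp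
qed

lemma fin_supp_subset_singleton: "{w. P w \<noteq> 0} \<subseteq> {v} \<Longrightarrow> fin_supp P"
  unfolding fin_supp_def using finite_subset by blast

lemma fin_supp_letter: "fin_supp (letter a)"
  by (rule fin_supp_subset_singleton[of _ "[a]"]) (auto simp: letter_def)

lemma fin_supp_ncmono: "fin_supp (ncmono w)"
  by (rule fin_supp_subset_singleton[of _ w]) (auto simp: ncmono_def)

lemma fin_supp_ncsmult_ncone: "fin_supp (ncsmult c ncone)"
  by (rule fin_supp_subset_singleton[of _ "[]"]) (auto simp: ncsmult_def ncone_def)

lemma ideal_gen_smult: "a \<in> ideal_gen G \<Longrightarrow> ncsmult c a \<in> ideal_gen G"
  using ideal_gen.left[OF _ fin_supp_ncsmult_ncone, of a G c]
  by (simp add: ncmul_smult_left ncmul_one_left)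

lemma ideal_gen_lincomb:
  assumes "finite S" "\<And>w. w \<in> S \<Longrightarrow> g w \<in> ideal_gen G"
  shows "(\<lambda>x. \<Sum>w\<in>S. c w * g w x) \<in> ideal_gen G"
  using assms
proof (induction S rule: finite_induct)
  case empty
  then show ?case by (simp add: ideal_gen.zero)
next
  case (insert a S)
  then have "ncadd (ncsmult (c a) (g a)) (\<lambda>x. \<Sum>w\<in>S. c w * g w x) \<in> ideal_gen G"
    by (intro ideal_gen.add ideal_gen_smult) auto
  with insert.hyps show ?case
    by (simp add: ncadd_def ncsmult_def)
qed

lemma boson_eq_refl: "boson_eq C d P P"
  unfolding boson_eq_def boson_ideal_def ncdiff_def by (simp add: ideal_gen.zero)

lemma boson_eq_trans [trans]:
  assumes "boson_eq C d P Q" "boson_eq C d Q R"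
  shows "boson_eq C d P R"
proof -
  have "ncadd (ncdiff P Q) (ncdiff Q R) \<in> boson_ideal C d"
    using assms unfolding boson_eq_def boson_ideal_def by (rule ideal_gen.add)
  then show ?thesis
    by (simp add: boson_eq_def ncadd_def ncdiff_def)
qed

lemma eq_boson_eq_trans [trans]: "P = Q \<Longrightarrow> boson_eq C d Q R \<Longrightarrow> boson_eq C d P R"
  by simp

lemma boson_eq_add:
  assumes "boson_eq C d P P'" "boson_eq C d Q Q'"
  shows "boson_eq C d (ncadd P Q) (ncadd P' Q')"
proof -
  have "ncadd (ncdiff P P') (ncdiff Q Q') \<in> boson_ideal C d"
    using assms unfolding boson_eq_def boson_ideal_def by (rule ideal_gen.add)
  then show ?thesis
    by (simp add: boson_eq_def ncadd_def ncdiff_def algebra_simps)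
qed

lemma boson_eq_smult: "boson_eq C d P P' \<Longrightarrow> boson_eq C d (ncsmult c P) (ncsmult c P')"
  using ideal_gen_smult[of "ncdiff P P'" _ c]
  by (simp add: boson_eq_def boson_ideal_def ncsmult_def ncdiff_def right_diff_distrib)

lemma boson_eq_mult_left:
  "fin_supp R \<Longrightarrow> boson_eq C d P P' \<Longrightarrow> boson_eq C d (ncmul R P) (ncmul R P')"
  unfolding boson_eq_def boson_ideal_def ncmul_diff_right[symmetric] by (rule ideal_gen.left)

lemma boson_eq_mult_right:
  "boson_eq C d P P' \<Longrightarrow> fin_supp R \<Longrightarrow> boson_eq C d (ncmul P R) (ncmul P' R)"
  unfolding boson_eq_def boson_ideal_def ncmul_diff_left[symmetric] by (rule ideal_gen.right)

lemma boson_eq_add_ideal: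
  "Z \<in> boson_ideal C d \<Longrightarrow> boson_eq C d (ncadd P (ncsmult c Z)) P"
  using ideal_gen_smult[of Z _ c]
  by (simp add: boson_eq_def boson_ideal_def ncadd_def ncdiff_def ncsmult_def)

lemma boson_eq_adjacent:
  "boson_eq C d (ncmul (letter (i, p)) (letter (j, p + 1)))
     (ncadd (ncsmult (qpow (d i * C i j)) (ncmul (letter (j, p + 1)) (letter (i, p))))
        (ncsmult (if i = j then 1 - qpow (2 * d i) else 0) ncone))"
proof -
  have "ncdiff (ncdiff (ncmul (letter (i, p)) (letter (j, p + 1)))
       (ncsmult (qpow (d i * C i j)) (ncmul (letter (j, p + 1)) (letter (i, p)))))
       (ncsmult (if i = j then 1 - qpow (2 * d i) else 0) ncone) \<in> boson_ideal C d"
    unfolding boson_ideal_def by (rule ideal_gen.gen) (auto simp: boson_rel_adj_def)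
  then show ?thesis
    by (simp add: boson_eq_def ncdiff_def ncadd_def diff_diff_eq)
qed

definition nc_linear :: "('a ncpoly \<Rightarrow> 'b ncpoly) \<Rightarrow> bool" where
  "nc_linear \<Phi> \<longleftrightarrow>
     (\<forall>P Q. \<Phi> (ncadd P Q) = ncadd (\<Phi> P) (\<Phi> Q)) \<and> (\<forall>c P. \<Phi> (ncsmult c P) = ncsmult c (\<Phi> P))"

lemma nc_linear_sum:
  assumes "nc_linear \<Phi>"
  shows "\<Phi> (\<lambda>x. \<Sum>w\<in>S. c w * P w x) = (\<lambda>x. \<Sum>w\<in>S. c w * \<Phi> (P w) x)"
proof -
  have "\<Phi> (\<lambda>_. 0) = \<Phi> (ncsmult 0 (\<lambda>_. 0))"
    by (simp add: ncsmult_def)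
  also have "\<dots> = ncsmult 0 (\<Phi> (\<lambda>_. 0))"
    using assms by (simp add: nc_linear_def)
  finally have zero: "\<Phi> (\<lambda>_. 0) = (\<lambda>_. 0)"
    by (simp add: ncsmult_def)
  show ?thesis
  proof (induction S rule: infinite_finite_induct)
    case (insert a S)
    have "(\<lambda>x. \<Sum>w\<in>insert a S. c w * P w x) =
        ncadd (ncsmult (c a) (P a)) (\<lambda>x. \<Sum>w\<in>S. c w * P w x)"
      using insert.hyps by (simp add: ncadd_def ncsmult_def)
    with insert assms show ?case
      by (simp add: nc_linear_def ncadd_def ncsmult_def)
  qed (simp_all add: zero)
qed

lemma nc_linear_ncmul_left: "nc_linear (ncmul R)"
  by (simp add: nc_linear_def ncmul_add_right ncmul_smult_right)

lemma nc_linear_ncmul_right: "nc_linear (\<lambda>P. ncmul P R)"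
  by (simp add: nc_linear_def ncmul_add_left ncmul_smult_left)

lemma nc_linear_comp: "nc_linear \<Phi> \<Longrightarrow> nc_linear \<Psi> \<Longrightarrow> nc_linear (\<lambda>P. \<Psi> (\<Phi> P))"
  by (simp add: nc_linear_def)

lemma nc_linear_ncadd:
  "nc_linear \<Phi> \<Longrightarrow> nc_linear \<Psi> \<Longrightarrow> nc_linear (\<lambda>P. ncadd (\<Phi> P) (\<Psi> P))"
  by (simp add: nc_linear_def ncadd_def ncsmult_def algebra_simps)

lemma nc_linear_ncsmult: "nc_linear \<Phi> \<Longrightarrow> nc_linear (\<lambda>P. ncsmult c (\<Phi> P))"
  by (simp add: nc_linear_def ncadd_def ncsmult_def algebra_simps)

lemma boson_eq_by_monomials:
  assumes "nc_linear \<Phi>" "nc_linear \<Psi>" "fin_supp u"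
    and "\<And>w. u w \<noteq> 0 \<Longrightarrow> boson_eq C d (\<Phi> (ncmono w)) (\<Psi> (ncmono w))"
  shows "boson_eq C d (\<Phi> u) (\<Psi> u)"
proof -
  let ?S = "{w. u w \<noteq> 0}"
  have "(\<lambda>x. \<Sum>w\<in>?S. u w * ncdiff (\<Phi> (ncmono w)) (\<Psi> (ncmono w)) x) \<in> boson_ideal C d"
    using assms(3,4) unfolding boson_eq_def boson_ideal_def fin_supp_def
    by (intro ideal_gen_lincomb) auto
  moreover have "\<Phi> u = (\<lambda>x. \<Sum>w\<in>?S. u w * \<Phi> (ncmono w) x)"
    using arg_cong[OF ncpoly_expansion[OF assms(3)], of \<Phi>] nc_linear_sum[OF assms(1)] by simp
  moreover have "\<Psi> u = (\<lambda>x. \<Sum>w\<in>?S. u w * \<Psi> (ncmono w) x)"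
    using arg_cong[OF ncpoly_expansion[OF assms(3)], of \<Psi>] nc_linear_sum[OF assms(2)] by simp
  ultimately show ?thesis
    by (simp add: boson_eq_def ncdiff_def right_diff_distrib sum_subtractf)
qed

lemma map_pair_eq_iff: "x = map (\<lambda>a. (a, k)) z \<longleftrightarrow> (\<forall>y\<in>set x. snd y = k) \<and> map fst x = z"
  by (induction x arbitrary: z) (auto simp: Cons_eq_map_conv)

lemma emb_mul: "emb k (ncmul P Q) = ncmul (emb k P) (emb k Q)"
proof (rule ext)
  fix x :: "('a \<times> int) list"
  show "emb k (ncmul P Q) x = ncmul (emb k P) (emb k Q) x"
  proof (cases "\<forall>y\<in>set x. snd y = k")
    case True
    then have "ncmul (emb k P) (emb k Q) x =
        (\<Sum>n\<le>length x. P (take n (map fst x)) * Q (drop n (map fst x)))"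
      unfolding ncmul_def emb_def
      by (intro sum.cong refl) (auto simp: take_map drop_map dest: in_set_takeD in_set_dropD)
    with True show ?thesis
      by (simp add: emb_def ncmul_def)
  next
    case False
    then obtain y where y: "y \<in> set x" "snd y \<noteq> k" by blast
    have "emb k P (take n x) * emb k Q (drop n x) = 0" for n
    proof -
      have "y \<in> set (take n x) \<or> y \<in> set (drop n x)"
        using y(1) by (metis Un_iff append_take_drop_id set_append)
      with y(2) show ?thesis by (auto simp: emb_def)
    qed
    then have "ncmul (emb k P) (emb k Q) x = 0"
      unfolding ncmul_def by (intro sum.neutral) blast
    moreover have "emb k (ncmul P Q) x = 0"
      using False by (auto simp: emb_def)
    ultimately show ?thesis by simp
  qed
qed

lemma emb_zero: "emb k (\<lambda>_. 0) = (\<lambda>_. 0)"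
  by (simp add: emb_def)

lemma emb_letter: "emb k (letter j) = letter (j, k)"
  by (auto simp: emb_def letter_def fun_eq_iff)

lemma emb_ncone: "emb k ncone = ncone"
  by (auto simp: emb_def ncone_def fun_eq_iff)

lemma emb_ncadd: "emb k (ncadd P Q) = ncadd (emb k P) (emb k Q)"
  by (auto simp: emb_def ncadd_def fun_eq_iff)

lemma emb_ncsmult: "emb k (ncsmult c P) = ncsmult c (emb k P)"
  by (auto simp: emb_def ncsmult_def fun_eq_iff)

lemma nc_linear_emb: "nc_linear (emb k)"
  by (simp add: nc_linear_def emb_ncadd emb_ncsmult)

lemma fin_supp_emb:
  assumes "fin_supp P"
  shows "fin_supp (emb k P)"
proof -
  have "{x. emb k P x \<noteq> 0} \<subseteq> map (\<lambda>a. (a, k)) ` {w. P w \<noteq> 0}"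
  proof
    fix x assume "x \<in> {x. emb k P x \<noteq> 0}"
    then have "\<forall>y\<in>set x. snd y = k" and "P (map fst x) \<noteq> 0"
      by (auto simp: emb_def split: if_splits)
    moreover from this(1) have "x = map (\<lambda>a. (a, k)) (map fst x)"
      using map_pair_eq_iff[of x k "map fst x"] by blast
    ultimately show "x \<in> map (\<lambda>a. (a, k)) ` {w. P w \<noteq> 0}" by blast
  qed
  with assms show ?thesis
    unfolding fin_supp_def by (meson finite_imageI finite_subset)
qed

lemma fin_supp_emb_ncmono: "fin_supp (emb k (ncmono w))"
  by (intro fin_supp_emb fin_supp_ncmono)

lemma emb_serre_el: "emb k (serre_el C d i j i j) = serre_el C d i j (i, k) (j, k)"
proof (rule ext)
  fix x :: "('a \<times> int) list"
  have layer_word: "replicate (n - r) (i, k) @ (j, k) # replicate r (i, k) =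
      map (\<lambda>a. (a, k)) (replicate (n - r) i @ j # replicate r i)" for n r
    by (simp add: map_replicate)
  show "emb k (serre_el C d i j i j) x = serre_el C d i j (i, k) (j, k) x"
  proof (cases "\<forall>y\<in>set x. snd y = k")
    case True
    then show ?thesis
      unfolding emb_def serre_el_def Let_def layer_word map_pair_eq_iff by simp
  next
    case False
    then have "(\<forall>y\<in>set x. snd y = k) = False" by simp
    then show ?thesis
      unfolding emb_def serre_el_def Let_def layer_word map_pair_eq_iff
      by (simp only: if_False simp_thms sum.neutral_const)
  qed
qed

lemma emb_serre_ideal:
  assumes "P \<in> serre_ideal C d"
  shows "emb k P \<in> boson_ideal C d"
  using assms unfolding serre_ideal_def
proof (induction rule: ideal_gen.induct)
  case zero
  show ?case unfolding boson_ideal_def emb_zero by (rule ideal_gen.zero)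
next
  case (gen g)
  then obtain i j where "g = serre_el C d i j i j" "i \<noteq> j"
    by blast
  then have "emb k g \<in> boson_rel_serre C d"
    unfolding boson_rel_serre_def by (auto simp: emb_serre_el)
  then show ?case unfolding boson_ideal_def by (blast intro: ideal_gen.gen)
next
  case (add a b)
  then show ?case
    by (simp add: emb_ncadd boson_ideal_def ideal_gen.add)
next
  case (left a p)
  then show ?case by (simp add: emb_mul boson_ideal_def ideal_gen.left fin_supp_emb)
next
  case (right a p)
  then show ?case by (simp add: emb_mul boson_ideal_def ideal_gen.right fin_supp_emb)
qed

lemma qpow_0 [simp]: "qpow 0 = 1"
  by (simp add: qpow_def)

lemma qpow_add: "qpow (a + b) = qpow a * qpow b"
proof -
  have "qhalf \<noteq> 0"
    by (simp add: qhalf_def Zero_fract_def eq_fract)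
  then show ?thesis
    by (simp add: qpow_def distrib_left power_int_add)
qed

lemma estar_ncone: "estar C d i ncone = (\<lambda>_. 0)"
  by (simp add: estar_def ncone_def)

lemma eprime_ncone: "eprime C d i ncone = (\<lambda>_. 0)"
  by (simp add: eprime_def ncone_def)

lemma nc_linear_estar: "nc_linear (estar C d i)"
  by (simp add: nc_linear_def estar_def ncadd_def ncsmult_def sum.distrib sum_distrib_left
      distrib_right mult.assoc)

lemma nc_linear_eprime: "nc_linear (eprime C d i)"
  by (simp add: nc_linear_def eprime_def ncadd_def ncsmult_def sum.distrib sum_distrib_left
      distrib_right mult.assoc)

lemma estar_letter_mult:
  "estar C d i (ncmul (letter j) P) =
     ncadd (if i = j then (\<lambda>v. qpow (d i * - sum_list (map (C i) v)) * P v) else (\<lambda>_. 0))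
       (ncmul (letter j) (estar C d i P))"
proof (rule ext)
  fix v
  show "estar C d i (ncmul (letter j) P) v =
     ncadd (if i = j then (\<lambda>v. qpow (d i * - sum_list (map (C i) v)) * P v) else (\<lambda>_. 0))
       (ncmul (letter j) (estar C d i P)) v"
  proof (cases v)
    case Nil
    then show ?thesis
      by (simp add: estar_def ncadd_def ncmul_letter_Nil ncmul_letter_Cons)
  next
    case (Cons a v')
    have "estar C d i (ncmul (letter j) P) v =
        ncmul (letter j) P (i # v) * qpow (d i * - sum_list (map (C i) v)) +
        (\<Sum>s\<le>length v'. ncmul (letter j) P (a # (take s v' @ i # drop s v')) *
           qpow (d i * - sum_list (map (C i) (drop s v'))))"
      unfolding estar_def Cons by (subst length_Cons, subst sum.atMost_Suc_shift) simp
    also have "\<dots> = ncadd (if i = j then (\<lambda>v. qpow (d i * - sum_list (map (C i) v)) * P v) else (\<lambda>_. 0))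
       (ncmul (letter j) (estar C d i P)) v"
      by (simp add: Cons ncadd_def ncmul_letter_Cons estar_def)
    finally show ?thesis .
  qed
qed

lemma eprime_mult_letter:
  "eprime C d i (ncmul P (letter j)) =
     ncadd (if i = j then (\<lambda>v. qpow (d i * - sum_list (map (C i) v)) * P v) else (\<lambda>_. 0))
       (ncmul (eprime C d i P) (letter j))"
proof (rule ext)
  fix v
  show "eprime C d i (ncmul P (letter j)) v =
     ncadd (if i = j then (\<lambda>v. qpow (d i * - sum_list (map (C i) v)) * P v) else (\<lambda>_. 0))
       (ncmul (eprime C d i P) (letter j)) v"
  proof (cases v rule: rev_cases)
    case Nil
    then show ?thesis
      by (simp add: eprime_def ncadd_def ncmul_letter_right_Nil
          ncmul_letter_right_snoc[of _ _ "[]", simplified])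
  next
    case (snoc v' a)
    have "eprime C d i (ncmul P (letter j)) v =
        (\<Sum>s\<le>length v'. ncmul P (letter j) ((take s v' @ i # drop s v') @ [a]) *
           qpow (d i * - sum_list (map (C i) (take s v')))) +
        ncmul P (letter j) (v @ [i]) * qpow (d i * - sum_list (map (C i) v))"
      unfolding eprime_def snoc length_append_singleton
      by (subst sum.atMost_Suc) (auto intro!: sum.cong)
    also have "\<dots> = ncadd (if i = j then (\<lambda>v. qpow (d i * - sum_list (map (C i) v)) * P v) else (\<lambda>_. 0))
       (ncmul (eprime C d i P) (letter j)) v"
      unfolding snoc ncadd_def ncmul_letter_right_snoc by (simp add: eprime_def add.commute)
    finally show ?thesis .
  qed
qed

lemma estar_ncmono_Cons:
  "estar C d i (ncmono (j # w)) =
     ncadd (ncsmult (if i = j then qpow (d i * - sum_list (map (C i) w)) else 0) (ncmono w))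
       (ncmul (letter j) (estar C d i (ncmono w)))"
  by (cases "i = j") (simp_all add: ncmono_Cons estar_letter_mult mult_ncmono_eq_ncsmult ncsmult_zero)

lemma eprime_ncmono_snoc:
  "eprime C d i (ncmono (w @ [j])) =
     ncadd (ncsmult (if i = j then qpow (d i * - sum_list (map (C i) w)) else 0) (ncmono w))
       (ncmul (eprime C d i (ncmono w)) (letter j))"
  by (cases "i = j") (simp_all add: ncmono_snoc eprime_mult_letter mult_ncmono_eq_ncsmult ncsmult_zero)

section \<open>Commuting f_{i,k} past a monomial of an adjacent layer\<close>

text \<open>The scalar bookkeeping for the correction term produced by one letter j of a word.\<close>

lemma kronecker_eq_qpow_product:
  "(if i = j then c else 0) =
     qpow (d i * C i j) * (c * qpow (d i * (N - C i i))) * (if i = j then qpow (d i * - N) else 0)"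
proof (cases "i = j")
  case True
  have "qpow (d i * C i i) * qpow (d i * (N - C i i)) * qpow (d i * - N) = 1"
    by (simp only: qpow_add[symmetric]) (simp add: algebra_simps)
  with True show ?thesis
    by (simp add: algebra_simps)
qed simp

lemma letter_emb_ncmono_commute:
  "boson_eq C d (ncmul (letter (i, k)) (emb (k + 1) (ncmono w)))
     (ncadd (ncsmult (qpow (d i * sum_list (map (C i) w)))
          (ncmul (emb (k + 1) (ncmono w)) (letter (i, k))))
        (ncsmult ((1 - qpow (2 * d i)) * qpow (d i * (sum_list (map (C i) w) - C i i)))
           (emb (k + 1) (estar C d i (ncmono w)))))"
proof (induction w)
  case Nil
  then show ?case
    by (simp add: ncmono_Nil emb_ncone estar_ncone emb_zero ncmul_one_left ncmul_one_right ncadd_def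
        ncsmult_def boson_eq_refl)
next
  case (Cons j w)
  let ?F = "letter (i, k)" and ?X = "letter (j, k + 1)"
  let ?B = "emb (k + 1) (ncmono w)" and ?E = "emb (k + 1) (estar C d i (ncmono w))"
  let ?N = "sum_list (map (C i) w)" and ?\<gamma> = "1 - qpow (2 * d i)"
  let ?\<delta> = "if i = j then ?\<gamma> else 0"
  have "ncmul ?F (emb (k + 1) (ncmono (j # w))) = ncmul (ncmul ?F ?X) ?B"
    by (simp add: ncmono_Cons emb_mul emb_letter ncmul_assoc)
  also have "boson_eq C d \<dots>
      (ncmul (ncadd (ncsmult (qpow (d i * C i j)) (ncmul ?X ?F)) (ncsmult ?\<delta> ncone)) ?B)"
    using boson_eq_adjacent fin_supp_emb_ncmono by (rule boson_eq_mult_right)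
  also have "\<dots> = ncadd (ncsmult (qpow (d i * C i j)) (ncmul ?X (ncmul ?F ?B))) (ncsmult ?\<delta> ?B)"
    by (simp add: ncmul_add_left ncmul_smult_left ncmul_assoc ncmul_one_left)
  also have "boson_eq C d \<dots>
      (ncadd (ncsmult (qpow (d i * C i j)) (ncmul ?X
          (ncadd (ncsmult (qpow (d i * ?N)) (ncmul ?B ?F))
             (ncsmult (?\<gamma> * qpow (d i * (?N - C i i))) ?E))))
        (ncsmult ?\<delta> ?B))"
    using Cons.IH
    by (intro boson_eq_add boson_eq_smult boson_eq_mult_left boson_eq_refl fin_supp_letter)
  also have "\<dots> = ncadd (ncsmult (qpow (d i * sum_list (map (C i) (j # w))))
          (ncmul (emb (k + 1) (ncmono (j # w))) ?F))
        (ncsmult (?\<gamma> * qpow (d i * (sum_list (map (C i) (j # w)) - C i i)))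
           (emb (k + 1) (estar C d i (ncmono (j # w)))))"
  proof -
    have estar_Cons: "emb (k + 1) (estar C d i (ncmono (j # w))) =
        ncadd (ncsmult (if i = j then qpow (d i * - ?N) else 0) ?B) (ncmul ?X ?E)"
      by (simp add: estar_ncmono_Cons emb_ncadd emb_ncsmult emb_mul emb_letter)
    have Q: "qpow (d i * sum_list (map (C i) (j # w))) = qpow (d i * C i j) * qpow (d i * ?N)"
      by (simp add: distrib_left qpow_add)
    have \<gamma>: "?\<gamma> * qpow (d i * (sum_list (map (C i) (j # w)) - C i i)) =
        qpow (d i * C i j) * (?\<gamma> * qpow (d i * (?N - C i i)))"
      by (simp add: algebra_simps flip: qpow_add)
    show ?thesis
      unfolding estar_Cons Q \<gamma> kronecker_eq_qpow_product[of i j ?\<gamma> d C ?N]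
      by (simp add: ncmono_Cons emb_mul emb_letter ncmul_assoc ncmul_add_right ncmul_smult_right)
        (simp add: fun_eq_iff ncadd_def ncsmult_def algebra_simps)
  qed
  finally show ?case .
qed

text \<open>
  The relation used here is f_{j,k-1} f_{i,k} = q_j^{c_ji} f_{i,k} f_{j,k-1} + \<delta>_ij (1 - q_j^2);
  symmetry of the form turns its coefficient into q_i^{c_ij}.
\<close>

lemma emb_ncmono_letter_commute:
  assumes sym: "\<And>j. d j * C j i = d i * C i j"
  shows "boson_eq C d (ncmul (emb (k - 1) (ncmono w)) (letter (i, k)))
     (ncadd (ncsmult (qpow (d i * sum_list (map (C i) w)))
          (ncmul (letter (i, k)) (emb (k - 1) (ncmono w))))
        (ncsmult ((1 - qpow (2 * d i)) * qpow (d i * (sum_list (map (C i) w) - C i i)))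
           (emb (k - 1) (eprime C d i (ncmono w)))))"
proof (induction w rule: rev_induct)
  case Nil
  then show ?case
    by (simp add: ncmono_Nil emb_ncone eprime_ncone emb_zero ncmul_one_left ncmul_one_right ncadd_def
        ncsmult_def boson_eq_refl)
next
  case (snoc j w)
  let ?F = "letter (i, k)" and ?X = "letter (j, k - 1)"
  let ?B = "emb (k - 1) (ncmono w)" and ?E = "emb (k - 1) (eprime C d i (ncmono w))"
  let ?N = "sum_list (map (C i) w)" and ?\<gamma> = "1 - qpow (2 * d i)"
  let ?\<delta> = "if i = j then ?\<gamma> else 0"
  have adj: "boson_eq C d (ncmul ?X ?F)
      (ncadd (ncsmult (qpow (d i * C i j)) (ncmul ?F ?X)) (ncsmult ?\<delta> ncone))"
    using boson_eq_adjacent[of C d j "k - 1" i] sym[of j] by (cases "i = j") simp_all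
  have "ncmul (emb (k - 1) (ncmono (w @ [j]))) ?F = ncmul ?B (ncmul ?X ?F)"
    by (simp add: ncmono_snoc emb_mul emb_letter ncmul_assoc)
  also have "boson_eq C d \<dots>
      (ncmul ?B (ncadd (ncsmult (qpow (d i * C i j)) (ncmul ?F ?X)) (ncsmult ?\<delta> ncone)))"
    using fin_supp_emb_ncmono adj by (rule boson_eq_mult_left)
  also have "\<dots> = ncadd (ncsmult (qpow (d i * C i j)) (ncmul (ncmul ?B ?F) ?X)) (ncsmult ?\<delta> ?B)"
    by (simp add: ncmul_add_right ncmul_smult_right ncmul_assoc ncmul_one_right)
  also have "boson_eq C d \<dots>
      (ncadd (ncsmult (qpow (d i * C i j))
          (ncmul (ncadd (ncsmult (qpow (d i * ?N)) (ncmul ?F ?B))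
             (ncsmult (?\<gamma> * qpow (d i * (?N - C i i))) ?E))
             ?X))
        (ncsmult ?\<delta> ?B))"
    using snoc.IH
    by (intro boson_eq_add boson_eq_smult boson_eq_mult_right boson_eq_refl fin_supp_letter)
  also have "\<dots> = ncadd (ncsmult (qpow (d i * sum_list (map (C i) (w @ [j]))))
          (ncmul ?F (emb (k - 1) (ncmono (w @ [j])))))
        (ncsmult (?\<gamma> * qpow (d i * (sum_list (map (C i) (w @ [j])) - C i i)))
           (emb (k - 1) (eprime C d i (ncmono (w @ [j])))))"
  proof -
    have eprime_snoc: "emb (k - 1) (eprime C d i (ncmono (w @ [j]))) =
        ncadd (ncsmult (if i = j then qpow (d i * - ?N) else 0) ?B) (ncmul ?E ?X)"
      by (simp add: eprime_ncmono_snoc emb_ncadd emb_ncsmult emb_mul emb_letter)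
    have Q: "qpow (d i * sum_list (map (C i) (w @ [j]))) = qpow (d i * C i j) * qpow (d i * ?N)"
      by (simp add: algebra_simps flip: qpow_add)
    have \<gamma>: "?\<gamma> * qpow (d i * (sum_list (map (C i) (w @ [j])) - C i i)) =
        qpow (d i * C i j) * (?\<gamma> * qpow (d i * (?N - C i i)))"
      by (simp add: algebra_simps flip: qpow_add)
    show ?thesis
      unfolding eprime_snoc Q \<gamma> kronecker_eq_qpow_product[of i j ?\<gamma> d C ?N]
      by (simp add: ncmono_snoc emb_mul emb_letter ncmul_assoc ncmul_add_left ncmul_smult_left)
        (simp add: fun_eq_iff ncadd_def ncsmult_def algebra_simps)
  qed
  finally show ?case .
qed

lemma sum_list_map_eq_word_content:
  fixes C :: "'i::finite \<Rightarrow> 'i \<Rightarrow> int"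
  shows "sum_list (map (C i) w) = (\<Sum>b\<in>UNIV. word_content w b * C i b)"
proof (induction w)
  case Nil
  then show ?case by (simp add: word_content_def)
next
  case (Cons a w)
  have "(\<Sum>b\<in>UNIV. word_content (a # w) b * C i b) =
      (\<Sum>b\<in>UNIV. (if b = a then C i a else 0) + word_content w b * C i b)"
    by (rule sum.cong) (auto simp: word_content_def algebra_simps)
  with Cons show ?case
    by (simp add: sum.distrib)
qed

lemma homog_content_sum_list:
  fixes C :: "'i::finite \<Rightarrow> 'i \<Rightarrow> int"
  shows "homog_content u \<beta> \<Longrightarrow> u w \<noteq> 0 \<Longrightarrow> sum_list (map (C i) w) = (\<Sum>b\<in>UNIV. \<beta> b * C i b)"
  by (simp add: homog_content_def sum_list_map_eq_word_content)

lemma neg_bil_wt_layer_simple_root: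
  fixes C :: "'i::finite \<Rightarrow> 'i \<Rightarrow> int"
  assumes "odd (k + m)"
  shows "- bil C d (wt_layer k (simple_root i)) (wt_layer m \<beta>) = d i * (\<Sum>b\<in>UNIV. \<beta> b * C i b)"
proof -
  have sign: "neg1pow (k + 1) * neg1pow (m + 1) = -1"
    using assms by (auto simp: neg1pow_def)
  have "bil C d (wt_layer k (simple_root i)) (wt_layer m \<beta>) =
      (\<Sum>a\<in>UNIV. if a = i
        then (\<Sum>b\<in>UNIV. (neg1pow (k + 1) * neg1pow (m + 1)) * (\<beta> b * d i * C i b)) else 0)"
    unfolding bil_def wt_layer_def simple_root_def
    by (rule sum.cong) (auto simp: algebra_simps)
  also have "\<dots> = - (\<Sum>b\<in>UNIV. \<beta> b * d i * C i b)"
    unfolding sign by (simp add: sum_negf)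
  finally show ?thesis
    by (simp add: sum_distrib_left algebra_simps)
qed

lemma letter_emb_q_commute:
  fixes C :: "'i::finite \<Rightarrow> 'i \<Rightarrow> int"
  assumes u: "fin_supp u" "homog_content u \<beta>" and estar_u: "estar C d i u \<in> serre_ideal C d"
  shows "boson_eq C d (ncmul (letter (i, k)) (emb (k + 1) u))
     (ncsmult (qpow (- bil C d (wt_layer k (simple_root i)) (wt_layer (k + 1) \<beta>)))
        (ncmul (emb (k + 1) u) (letter (i, k))))"
proof -
  let ?N = "\<Sum>b\<in>UNIV. \<beta> b * C i b" and ?\<gamma> = "1 - qpow (2 * d i)"
  let ?\<Phi> = "\<lambda>P. ncmul (letter (i, k)) (emb (k + 1) P)"
  let ?\<Psi> = "\<lambda>P. ncadd (ncsmult (qpow (d i * ?N)) (ncmul (emb (k + 1) P) (letter (i, k))))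
      (ncsmult (?\<gamma> * qpow (d i * (?N - C i i))) (emb (k + 1) (estar C d i P)))"
  have "boson_eq C d (?\<Phi> u) (?\<Psi> u)"
  proof (rule boson_eq_by_monomials[where \<Phi> = ?\<Phi> and \<Psi> = ?\<Psi>])
    show "nc_linear ?\<Phi>"
      by (rule nc_linear_comp[OF nc_linear_emb nc_linear_ncmul_left])
    show "nc_linear ?\<Psi>"
      by (rule nc_linear_ncadd[OF
          nc_linear_ncsmult[OF nc_linear_comp[OF nc_linear_emb nc_linear_ncmul_right]]
          nc_linear_ncsmult[OF nc_linear_comp[OF nc_linear_estar nc_linear_emb]]])
    fix w
    assume "u w \<noteq> 0"
    then have "sum_list (map (C i) w) = ?N"
      by (rule homog_content_sum_list[OF u(2)])
    with letter_emb_ncmono_commute[of C d i k w]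
    show "boson_eq C d (?\<Phi> (ncmono w)) (?\<Psi> (ncmono w))"
      by simp
  qed (rule u(1))
  also have "boson_eq C d \<dots> (ncsmult (qpow (d i * ?N)) (ncmul (emb (k + 1) u) (letter (i, k))))"
    using emb_serre_ideal[OF estar_u] by (rule boson_eq_add_ideal)
  finally show ?thesis
    by (simp add: neg_bil_wt_layer_simple_root)
qed

lemma emb_letter_q_commute:
  fixes C :: "'i::finite \<Rightarrow> 'i \<Rightarrow> int"
  assumes sym: "\<And>j. d j * C j i = d i * C i j"
    and v: "fin_supp v" "homog_content v \<beta>" and eprime_v: "eprime C d i v \<in> serre_ideal C d"
  shows "boson_eq C d (ncmul (emb (k - 1) v) (letter (i, k)))
     (ncsmult (qpow (- bil C d (wt_layer k (simple_root i)) (wt_layer (k - 1) \<beta>)))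
        (ncmul (letter (i, k)) (emb (k - 1) v)))"
proof -
  let ?N = "\<Sum>b\<in>UNIV. \<beta> b * C i b" and ?\<gamma> = "1 - qpow (2 * d i)"
  let ?\<Phi> = "\<lambda>P. ncmul (emb (k - 1) P) (letter (i, k))"
  let ?\<Psi> = "\<lambda>P. ncadd (ncsmult (qpow (d i * ?N)) (ncmul (letter (i, k)) (emb (k - 1) P)))
      (ncsmult (?\<gamma> * qpow (d i * (?N - C i i))) (emb (k - 1) (eprime C d i P)))"
  have "boson_eq C d (?\<Phi> v) (?\<Psi> v)"
  proof (rule boson_eq_by_monomials[where \<Phi> = ?\<Phi> and \<Psi> = ?\<Psi>])
    show "nc_linear ?\<Phi>"
      by (rule nc_linear_comp[OF nc_linear_emb nc_linear_ncmul_right])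
    show "nc_linear ?\<Psi>"
      by (rule nc_linear_ncadd[OF
          nc_linear_ncsmult[OF nc_linear_comp[OF nc_linear_emb nc_linear_ncmul_left]]
          nc_linear_ncsmult[OF nc_linear_comp[OF nc_linear_eprime nc_linear_emb]]])
    fix w
    assume "v w \<noteq> 0"
    then have "sum_list (map (C i) w) = ?N"
      by (rule homog_content_sum_list[OF v(2)])
    with emb_ncmono_letter_commute[of d C i k w, OF sym]
    show "boson_eq C d (?\<Phi> (ncmono w)) (?\<Psi> (ncmono w))"
      by simp
  qed (rule v(1))
  also have "boson_eq C d \<dots> (ncsmult (qpow (d i * ?N)) (ncmul (letter (i, k)) (emb (k - 1) v)))"
    using emb_serre_ideal[OF eprime_v] by (rule boson_eq_add_ideal)
  finally show ?thesis
    by (simp add: neg_bil_wt_layer_simple_root)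
qed

theorem lemma6p2:
  fixes C :: "'i::finite \<Rightarrow> 'i \<Rightarrow> int" and d :: "'i \<Rightarrow> int"
  assumes "finite_type_cartan C d"
  shows "(\<forall>(i::'i) (k::int) (u::'i ncpoly) \<beta>.
            fin_supp u \<and> homog_content u \<beta> \<and> estar C d i u \<in> serre_ideal C d \<longrightarrow>
            boson_eq C d (ncmul (letter (i, k)) (emb (k + 1) u))
              (ncsmult (qpow (- bil C d (wt_layer k (simple_root i)) (wt_layer (k + 1) \<beta>)))
                 (ncmul (emb (k + 1) u) (letter (i, k)))))
       \<and> (\<forall>(i::'i) (k::int) (v::'i ncpoly) \<beta>.
            fin_supp v \<and> homog_content v \<beta> \<and> eprime C d i v \<in> serre_ideal C d \<longrightarrow>
            boson_eq C d (ncmul (emb (k - 1) v) (letter (i, k)))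
              (ncsmult (qpow (- bil C d (wt_layer k (simple_root i)) (wt_layer (k - 1) \<beta>)))
                 (ncmul (letter (i, k)) (emb (k - 1) v))))"
proof -
  have sym: "\<And>i j. d j * C j i = d i * C i j"
    using assms by (simp add: finite_type_cartan_def)
  show ?thesis
    using letter_emb_q_commute emb_letter_q_commute[where C = C and d = d, OF sym] by blast
qed

end
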